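(* For every $n\geq 1$, the relation $\leq$ on $\mathcal{PP}(n)$ defined by: $P\leq Q$ if and only if for all $x,y\in P$, $\theta_{P,Q}(x)\leq_h\theta_{P,Q}(y)$ in $Q$ implies $x\leq_h y$ in $P$, is a partial order on $\mathcal{PP}(n)$.
   Context: A plane poset is a finite set $P$ with two partial orders $\leq_h$ and $\leq_r$ such that for all $x\neq y$ in $P$, $x$ and $y$ are comparable for $\leq_h$ if and only if they are not comparable for $\leq_r$. $\mathcal{PP}(n)$ is the set of isomorphism classes (bijections preserving both orders) of plane posets with $n$ elements. On any plane poset the relation $x\leq y$ iff ($x\leq_h y$ or $x\leq_r y$) is a total order (known fact). For $P,Q$ of the same cardinality, $\theta_{P,Q}:P\to Q$ is the unique bijection increasing for these total orders. *)

theory Defs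
  imports Main
begin

type_synonym pposet = "nat set \<times> nat rel \<times> nat rel"

definition pcar :: "pposet \<Rightarrow> nat set" where "pcar P = fst P"
definition ph :: "pposet \<Rightarrow> nat rel" where "ph P = fst (snd P)"
definition pr :: "pposet \<Rightarrow> nat rel" where "pr P = snd (snd P)"

definition plane_poset :: "pposet \<Rightarrow> bool" where
  "plane_poset P \<longleftrightarrow>
     finite (pcar P) \<and>
     ph P \<subseteq> pcar P \<times> pcar P \<and> pr P \<subseteq> pcar P \<times> pcar P \<and>
     partial_order_on (pcar P) (ph P) \<and> partial_order_on (pcar P) (pr P) \<and>
     (\<forall>x\<in>pcar P. \<forall>y\<in>pcar P. x \<noteq> y \<longrightarrow>
        (((x, y) \<in> ph P \<or> (y, x) \<in> ph P) \<longleftrightarrow> \<not> ((x, y) \<in> pr P \<or> (y, x) \<in> pr P)))"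

definition pp_iso :: "pposet \<Rightarrow> pposet \<Rightarrow> bool" where
  "pp_iso P Q \<longleftrightarrow> (\<exists>f. bij_betw f (pcar P) (pcar Q) \<and>
     (\<forall>x\<in>pcar P. \<forall>y\<in>pcar P.
        ((x, y) \<in> ph P \<longleftrightarrow> (f x, f y) \<in> ph Q) \<and>
        ((x, y) \<in> pr P \<longleftrightarrow> (f x, f y) \<in> pr Q)))"

definition ptot :: "pposet \<Rightarrow> nat rel" where
  "ptot P = ph P \<union> pr P"

text \<open>theta_{P,Q}: the unique bijection pcar P \<rightarrow> pcar Q increasing for the total orders
  (extended by undefined outside pcar P to make it unique as a HOL function).\<close>
definition theta :: "pposet \<Rightarrow> pposet \<Rightarrow> nat \<Rightarrow> nat" where
  "theta P Q = (THE f. bij_betw f (pcar P) (pcar Q) \<and>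
       (\<forall>x\<in>pcar P. \<forall>y\<in>pcar P. (x, y) \<in> ptot P \<longrightarrow> (f x, f y) \<in> ptot Q) \<and>
       (\<forall>x. x \<notin> pcar P \<longrightarrow> f x = undefined))"

definition pp_le :: "pposet \<Rightarrow> pposet \<Rightarrow> bool" where
  "pp_le P Q \<longleftrightarrow> (\<forall>x\<in>pcar P. \<forall>y\<in>pcar P.
      (theta P Q x, theta P Q y) \<in> ph Q \<longrightarrow> (x, y) \<in> ph P)"

definition PP :: "nat \<Rightarrow> pposet set set" where
  "PP n = {C. \<exists>P. plane_poset P \<and> card (pcar P) = n \<and>
                  C = {Q. plane_poset Q \<and> pp_iso P Q}}"

definition PP_le :: "nat \<Rightarrow> (pposet set) rel" where
  "PP_le n = {(C, D). C \<in> PP n \<and> D \<in> PP n \<and> (\<exists>P\<in>C. \<exists>Q\<in>D. pp_le P Q)}"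

end

theory Submission
  imports Defs
begin

(* The union of the two orders of a plane poset is a finite linear order, and between two
   finite linear orders of the same size there is exactly one increasing bijection, the one
   matching ranks. Uniqueness makes theta natural: isomorphisms commute with it, so the relation
   is well defined on classes, and theta_{P,P} = id, theta_{Q,R} o theta_{P,Q} = theta_{P,R}
   give reflexivity and transitivity. If P <= Q <= P, then theta_{P,Q} preserves and reflects
   <=_h as well as the total order; as two distinct elements are <=_r-related exactly when they
   are ordered but <=_h-incomparable, theta_{P,Q} is then an isomorphism. *)

definition rank_in :: "'a set \<Rightarrow> 'a rel \<Rightarrow> 'a \<Rightarrow> nat" where
  "rank_in A r x = card {y \<in> A. (y, x) \<in> r \<and> y \<noteq> x}"

lemma linear_order_onD:
  assumes "linear_order_on A r"
  shows "r \<subseteq> A \<times> A" "refl_on A r" "trans r" "antisym r" "total_on A r"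
  using assms unfolding order_on_defs by auto

lemma rank_in_mono:
  assumes "finite A" "linear_order_on A r" "(x, y) \<in> r"
  shows "rank_in A r x \<le> rank_in A r y"
proof -
  note r = linear_order_onD[OF assms(2)]
  have "{z \<in> A. (z, x) \<in> r \<and> z \<noteq> x} \<subseteq> {z \<in> A. (z, y) \<in> r \<and> z \<noteq> y}"
    using assms(3) r(3,4) by (auto dest: transD antisymD)
  then show ?thesis
    unfolding rank_in_def using assms(1) by (intro card_mono) auto
qed

lemma rank_in_strict_mono:
  assumes "finite A" "linear_order_on A r" "(x, y) \<in> r" "x \<noteq> y"
  shows "rank_in A r x < rank_in A r y"
proof -
  note r = linear_order_onD[OF assms(2)]
  have "{z \<in> A. (z, x) \<in> r \<and> z \<noteq> x} \<subset> {z \<in> A. (z, y) \<in> r \<and> z \<noteq> y}"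
    using assms(3,4) r(1,3,4) by (auto dest: transD antisymD)
  then show ?thesis
    unfolding rank_in_def using assms(1) by (intro psubset_card_mono) auto
qed

lemma bij_betw_rank_in:
  assumes "finite A" "linear_order_on A r"
  shows "bij_betw (rank_in A r) A {..<card A}"
proof -
  note r = linear_order_onD[OF assms(2)]
  have inj: "inj_on (rank_in A r) A"
  proof (rule inj_onI, rule ccontr)
    fix x y assume "x \<in> A" "y \<in> A" "rank_in A r x = rank_in A r y" "x \<noteq> y"
    then show False
      using r(5) rank_in_strict_mono[OF assms, of x y] rank_in_strict_mono[OF assms, of y x]
      by (auto simp: total_on_def)
  qed
  have "rank_in A r x < card A" if "x \<in> A" for x
    unfolding rank_in_def using assms(1) that by (intro psubset_card_mono) auto
  then have "rank_in A r ` A \<subseteq> {..<card A}" by auto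
  moreover have "card (rank_in A r ` A) = card {..<card A}"
    using card_image[OF inj] by simp
  ultimately have "rank_in A r ` A = {..<card A}" by (intro card_subset_eq) auto
  with inj show ?thesis by (simp add: bij_betw_def)
qed

definition mono_bij_betw :: "('a \<Rightarrow> 'b) \<Rightarrow> 'a set \<Rightarrow> 'a rel \<Rightarrow> 'b set \<Rightarrow> 'b rel \<Rightarrow> bool" where
  "mono_bij_betw f A r B s \<longleftrightarrow>
     bij_betw f A B \<and> (\<forall>x \<in> A. \<forall>y \<in> A. (x, y) \<in> r \<longrightarrow> (f x, f y) \<in> s)"

lemma mono_bij_betwD:
  assumes "mono_bij_betw f A r B s"
  shows "bij_betw f A B" "\<And>x y. x \<in> A \<Longrightarrow> y \<in> A \<Longrightarrow> (x, y) \<in> r \<Longrightarrow> (f x, f y) \<in> s"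
  using assms unfolding mono_bij_betw_def by auto

lemma mono_bij_betw_id: "mono_bij_betw id A r A r"
  by (simp add: mono_bij_betw_def)

lemma mono_bij_betw_comp:
  assumes "mono_bij_betw f A r B s" "mono_bij_betw g B s C t"
  shows "mono_bij_betw (g \<circ> f) A r C t"
  using assms bij_betw_trans[of f A B g C] bij_betw_apply[of f A B]
  unfolding mono_bij_betw_def by (simp add: comp_def)

lemma mono_bij_betw_cong:
  assumes "\<And>x. x \<in> A \<Longrightarrow> f x = g x" "mono_bij_betw f A r B s"
  shows "mono_bij_betw g A r B s"
proof -
  have "bij_betw f A B = bij_betw g A B" by (rule bij_betw_cong) (rule assms(1))
  with assms show ?thesis unfolding mono_bij_betw_def by auto
qed

lemma mono_bij_betw_reflects:
  assumes "linear_order_on A r" "antisym s" "mono_bij_betw f A r B s"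
    "x \<in> A" "y \<in> A" "(f x, f y) \<in> s"
  shows "(x, y) \<in> r"
proof (rule ccontr)
  assume "(x, y) \<notin> r"
  moreover have "(x, x) \<in> r" using linear_order_onD(2)[OF assms(1)] assms(4)
    by (simp add: refl_on_def)
  ultimately have "(y, x) \<in> r" "x \<noteq> y"
    using linear_order_onD(5)[OF assms(1)] assms(4,5) by (auto simp: total_on_def)
  then have "f x = f y"
    using mono_bij_betwD(2)[OF assms(3)] assms(2,4-6) by (auto dest: antisymD)
  then show False
    using \<open>x \<noteq> y\<close> mono_bij_betwD(1)[OF assms(3)] assms(4,5) by (auto simp: bij_betw_def inj_on_def)
qed

lemma rank_in_mono_bij_betw:
  assumes "linear_order_on A r" "linear_order_on B s" "mono_bij_betw f A r B s" "x \<in> A"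
  shows "rank_in B s (f x) = rank_in A r x"
proof -
  have bij: "bij_betw f A B" by (rule mono_bij_betwD(1)[OF assms(3)])
  have "(f y, f x) \<in> s \<longleftrightarrow> (y, x) \<in> r" if "y \<in> A" for y
    using mono_bij_betwD(2)[OF assms(3)] mono_bij_betw_reflects[OF assms(1) _ assms(3)]
      linear_order_onD(4)[OF assms(2)] that assms(4) by blast
  moreover have "f y = f x \<longleftrightarrow> y = x" if "y \<in> A" for y
    using bij that assms(4) by (auto simp: bij_betw_def inj_on_def)
  ultimately have "{z \<in> B. (z, f x) \<in> s \<and> z \<noteq> f x} = f ` {y \<in> A. (y, x) \<in> r \<and> y \<noteq> x}"
    using bij_betw_imp_surj_on[OF bij] by auto
  moreover have "inj_on f {y \<in> A. (y, x) \<in> r \<and> y \<noteq> x}"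
    using bij by (auto simp: bij_betw_def intro: inj_on_subset)
  ultimately show ?thesis unfolding rank_in_def by (simp add: card_image)
qed

lemma mono_bij_betw_unique:
  assumes "finite B" "linear_order_on A r" "linear_order_on B s"
    "mono_bij_betw f A r B s" "mono_bij_betw g A r B s" "x \<in> A"
  shows "f x = g x"
proof -
  have "f x \<in> B" "g x \<in> B"
    using assms(4-6) by (auto dest!: mono_bij_betwD(1) bij_betw_apply)
  moreover have "rank_in B s (f x) = rank_in B s (g x)"
    using rank_in_mono_bij_betw[OF assms(2,3,4,6)] rank_in_mono_bij_betw[OF assms(2,3,5,6)] by simp
  ultimately show ?thesis
    using bij_betw_rank_in[OF assms(1,3)] by (auto simp: bij_betw_def inj_on_def)
qed

lemma mono_bij_betw_exists:
  assumes "finite A" "finite B" "linear_order_on A r" "linear_order_on B s" "card A = card B"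
  shows "\<exists>f. mono_bij_betw f A r B s"
proof
  let ?rA = "rank_in A r" and ?rB = "rank_in B s"
  let ?f = "\<lambda>x. inv_into B ?rB (?rA x)"
  have bij_rB: "bij_betw ?rB B {..<card A}"
    using bij_betw_rank_in[OF assms(2,4)] assms(5) by simp
  have bij: "bij_betw ?f A B"
    using bij_betw_trans[OF bij_betw_rank_in[OF assms(1,3)] bij_betw_inv_into[OF bij_rB]]
    by (simp add: comp_def)
  have rank_f: "?rB (?f x) = ?rA x" if "x \<in> A" for x
    using bij_betw_inv_into_right[OF bij_rB] bij_betw_apply[OF bij_betw_rank_in[OF assms(1,3)] that]
    by simp
  have "(?f x, ?f y) \<in> s" if xy: "x \<in> A" "y \<in> A" "(x, y) \<in> r" for x y
  proof (rule ccontr)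
    assume not_s: "(?f x, ?f y) \<notin> s"
    have in_B: "?f x \<in> B" "?f y \<in> B" using bij xy by (auto dest: bij_betw_apply)
    with not_s linear_order_onD(2,5)[OF assms(4)] have "(?f y, ?f x) \<in> s" "?f y \<noteq> ?f x"
      unfolding total_on_def refl_on_def by metis+
    then have "?rA y < ?rA x"
      using rank_in_strict_mono[OF assms(2,4)] rank_f xy(1,2) by metis
    then show False using rank_in_mono[OF assms(1,3) xy(3)] by simp
  qed
  with bij show "mono_bij_betw ?f A r B s" by (simp add: mono_bij_betw_def)
qed


definition pp_swap :: "pposet \<Rightarrow> pposet" where
  "pp_swap P = (pcar P, pr P, ph P)"

lemma pp_swap_simps [simp]:
  "pcar (pp_swap P) = pcar P" "ph (pp_swap P) = pr P" "pr (pp_swap P) = ph P"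
  "ptot (pp_swap P) = ptot P"
  by (auto simp: pp_swap_def pcar_def ph_def pr_def ptot_def)

lemma plane_poset_pp_swap: "plane_poset P \<Longrightarrow> plane_poset (pp_swap P)"
  unfolding plane_poset_def by auto

lemma plane_posetD:
  assumes "plane_poset P"
  shows "finite (pcar P)" "partial_order_on (pcar P) (ph P)" "partial_order_on (pcar P) (pr P)"
    "\<And>x y. x \<in> pcar P \<Longrightarrow> y \<in> pcar P \<Longrightarrow> x \<noteq> y \<Longrightarrow>
       ((x, y) \<in> ph P \<or> (y, x) \<in> ph P) \<longleftrightarrow> \<not> ((x, y) \<in> pr P \<or> (y, x) \<in> pr P)"
  using assms unfolding plane_poset_def by auto

lemma ptot_subset: "plane_poset P \<Longrightarrow> ptot P \<subseteq> pcar P \<times> pcar P"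
  unfolding plane_poset_def ptot_def by auto

lemma ptot_ph_pr_trans:
  assumes "plane_poset P" "(x, y) \<in> ph P" "(y, z) \<in> pr P"
  shows "(x, z) \<in> ptot P"
proof -
  note H = partial_order_onD[OF plane_posetD(2)[OF assms(1)]]
  note R = partial_order_onD[OF plane_posetD(3)[OF assms(1)]]
  note comparable = plane_posetD(4)[OF assms(1)]
  have mem: "x \<in> pcar P" "y \<in> pcar P" "z \<in> pcar P" using assms(2,3) H(4) R(4) by auto
  consider "x = y" | "y = z" | "x = z" | "x \<noteq> y" "y \<noteq> z" "x \<noteq> z" by blast
  then show ?thesis
  proof cases
    case 4
    have "(z, x) \<notin> ph P"
    proof
      assume "(z, x) \<in> ph P"
      then have "(z, y) \<in> ph P" using assms(2) H(2) by (auto dest: transD)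
      then show False using comparable[OF mem(2,3) 4(2)] assms(3) by blast
    qed
    moreover have "(z, x) \<notin> pr P"
    proof
      assume "(z, x) \<in> pr P"
      then have "(y, x) \<in> pr P" using assms(3) R(2) by (auto dest: transD)
      then show False using comparable[OF mem(1,2) 4(1)] assms(2) by blast
    qed
    ultimately show ?thesis using comparable[OF mem(1,3) 4(3)] unfolding ptot_def by blast
  qed (use assms mem H(1) in \<open>auto simp: ptot_def refl_on_def\<close>)
qed

lemma ptot_pr_ph_trans:
  assumes "plane_poset P" "(x, y) \<in> pr P" "(y, z) \<in> ph P"
  shows "(x, z) \<in> ptot P"
  using ptot_ph_pr_trans[OF plane_poset_pp_swap[OF assms(1)]] assms(2,3) by simp

lemma linear_order_on_ptot:
  assumes "plane_poset P"
  shows "linear_order_on (pcar P) (ptot P)"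
proof -
  note H = partial_order_onD[OF plane_posetD(2)[OF assms]]
  note R = partial_order_onD[OF plane_posetD(3)[OF assms]]
  note comparable = plane_posetD(4)[OF assms]
  have "trans (ptot P)"
    using H(2) R(2) ptot_ph_pr_trans[OF assms] ptot_pr_ph_trans[OF assms]
    unfolding ptot_def trans_def by blast
  moreover have "antisym (ptot P)"
  proof (rule antisymI)
    fix x y assume "(x, y) \<in> ptot P" "(y, x) \<in> ptot P"
    moreover have "x \<in> pcar P" "y \<in> pcar P" using calculation ptot_subset[OF assms] by auto
    ultimately show "x = y"
      using H(3) R(3) comparable unfolding ptot_def by (blast dest: antisymD)
  qed
  moreover have "total_on (pcar P) (ptot P)"
    using comparable unfolding total_on_def ptot_def by blast
  ultimately show ?thesis
    using ptot_subset[OF assms] H(1) unfolding order_on_defs refl_on_def ptot_def by blast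
qed

lemma pr_iff_ptot_not_ph:
  assumes "plane_poset P" "x \<in> pcar P" "y \<in> pcar P" "x \<noteq> y"
  shows "(x, y) \<in> pr P \<longleftrightarrow> (x, y) \<in> ptot P \<and> (x, y) \<notin> ph P \<and> (y, x) \<notin> ph P"
  using plane_posetD(4)[OF assms] linear_order_onD(4)[OF linear_order_on_ptot[OF assms(1)]] assms(4)
  unfolding ptot_def by (blast dest: antisymD)


lemma theta_eq:
  assumes "plane_poset P" "plane_poset Q" "mono_bij_betw f (pcar P) (ptot P) (pcar Q) (ptot Q)"
  shows "theta P Q = (\<lambda>x. if x \<in> pcar P then f x else undefined)" (is "_ = ?g")
proof -
  let ?is_theta = "\<lambda>g. bij_betw g (pcar P) (pcar Q) \<and>
    (\<forall>x\<in>pcar P. \<forall>y\<in>pcar P. (x, y) \<in> ptot P \<longrightarrow> (g x, g y) \<in> ptot Q) \<and>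
    (\<forall>x. x \<notin> pcar P \<longrightarrow> g x = undefined)"
  have "mono_bij_betw ?g (pcar P) (ptot P) (pcar Q) (ptot Q)"
    by (rule mono_bij_betw_cong[OF _ assms(3)]) simp
  then have "?is_theta ?g" unfolding mono_bij_betw_def by simp
  moreover have "h = ?g" if "?is_theta h" for h
  proof
    fix x
    have "mono_bij_betw h (pcar P) (ptot P) (pcar Q) (ptot Q)"
      using that unfolding mono_bij_betw_def by blast
    then show "h x = ?g x"
      using that mono_bij_betw_unique[OF plane_posetD(1)[OF assms(2)] linear_order_on_ptot[OF assms(1)]
          linear_order_on_ptot[OF assms(2)] _ assms(3)]
      by (cases "x \<in> pcar P") auto
  qed
  ultimately show ?thesis unfolding theta_def by (rule the_equality[where P = ?is_theta])
qed

lemma theta_apply: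
  assumes "plane_poset P" "plane_poset Q" "mono_bij_betw f (pcar P) (ptot P) (pcar Q) (ptot Q)"
    "x \<in> pcar P"
  shows "theta P Q x = f x"
  using theta_eq[OF assms(1-3)] assms(4) by simp

lemma theta_mono_bij_betw:
  assumes "plane_poset P" "plane_poset Q" "card (pcar P) = card (pcar Q)"
  shows "mono_bij_betw (theta P Q) (pcar P) (ptot P) (pcar Q) (ptot Q)"
proof -
  obtain f where f: "mono_bij_betw f (pcar P) (ptot P) (pcar Q) (ptot Q)"
    using mono_bij_betw_exists[OF plane_posetD(1)[OF assms(1)] plane_posetD(1)[OF assms(2)]
        linear_order_on_ptot[OF assms(1)] linear_order_on_ptot[OF assms(2)] assms(3)] by blast
  have "bij_betw (theta P Q) (pcar P) (pcar Q)"
    using bij_betw_cong[of "pcar P" "theta P Q" f] mono_bij_betwD(1)[OF f]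
      theta_apply[OF assms(1,2) f] by blast
  with f show ?thesis
    using theta_apply[OF assms(1,2) f] unfolding mono_bij_betw_def by simp
qed

lemma theta_self:
  assumes "plane_poset P" "x \<in> pcar P"
  shows "theta P P x = x"
  using theta_apply[OF assms(1,1) mono_bij_betw_id assms(2)] by simp

lemma theta_comp:
  assumes "plane_poset P" "plane_poset Q" "plane_poset R"
    "card (pcar P) = card (pcar Q)" "card (pcar Q) = card (pcar R)" "x \<in> pcar P"
  shows "theta P R x = theta Q R (theta P Q x)"
  using theta_apply[OF assms(1,3) mono_bij_betw_comp[OF theta_mono_bij_betw[OF assms(1,2,4)]
        theta_mono_bij_betw[OF assms(2,3,5)]] assms(6)] by simp

definition pp_iso_map :: "(nat \<Rightarrow> nat) \<Rightarrow> pposet \<Rightarrow> pposet \<Rightarrow> bool" where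
  "pp_iso_map f P Q \<longleftrightarrow> bij_betw f (pcar P) (pcar Q) \<and>
     (\<forall>x\<in>pcar P. \<forall>y\<in>pcar P.
        ((x, y) \<in> ph P \<longleftrightarrow> (f x, f y) \<in> ph Q) \<and> ((x, y) \<in> pr P \<longleftrightarrow> (f x, f y) \<in> pr Q))"

lemma pp_iso_iff_pp_iso_map: "pp_iso P Q \<longleftrightarrow> (\<exists>f. pp_iso_map f P Q)"
  unfolding pp_iso_def pp_iso_map_def by blast

lemma pp_iso_map_mono_bij_betw:
  "pp_iso_map f P Q \<Longrightarrow> mono_bij_betw f (pcar P) (ptot P) (pcar Q) (ptot Q)"
  unfolding pp_iso_map_def mono_bij_betw_def ptot_def by blast

lemma pp_iso_map_inv:
  assumes "pp_iso_map f P Q"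
  shows "pp_iso_map (inv_into (pcar P) f) Q P"
proof -
  have bij: "bij_betw f (pcar P) (pcar Q)" using assms unfolding pp_iso_map_def by blast
  have "inv_into (pcar P) f x \<in> pcar P" "f (inv_into (pcar P) f x) = x" if "x \<in> pcar Q" for x
    using bij that by (auto simp: bij_betw_inv_into_right bij_betw_apply[OF bij_betw_inv_into])
  then show ?thesis
    using assms bij_betw_inv_into[OF bij] unfolding pp_iso_map_def by metis
qed

lemma pp_iso_map_comp:
  assumes "pp_iso_map f P Q" "pp_iso_map g Q R"
  shows "pp_iso_map (g \<circ> f) P R"
  using assms bij_betw_trans[of f "pcar P" "pcar Q" g "pcar R"] bij_betw_apply[of f "pcar P" "pcar Q"]
  unfolding pp_iso_map_def by (simp add: comp_def)

text \<open>\<open>\<le>\<^sub>r\<close> is recovered from \<open>\<le>\<^sub>h\<close> and the total order, so a bijection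
  preserving both of these is an isomorphism.\<close>
lemma pp_iso_mapI:
  assumes "plane_poset P" "plane_poset Q" "mono_bij_betw f (pcar P) (ptot P) (pcar Q) (ptot Q)"
    "\<And>x y. x \<in> pcar P \<Longrightarrow> y \<in> pcar P \<Longrightarrow> (x, y) \<in> ph P \<longleftrightarrow> (f x, f y) \<in> ph Q"
  shows "pp_iso_map f P Q"
proof -
  have bij: "bij_betw f (pcar P) (pcar Q)" by (rule mono_bij_betwD(1)[OF assms(3)])
  have "(x, y) \<in> pr P \<longleftrightarrow> (f x, f y) \<in> pr Q" if x: "x \<in> pcar P" and y: "y \<in> pcar P" for x y
  proof (cases "x = y")
    case True
    then show ?thesis
      using x bij_betw_apply[OF bij x] partial_order_onD(1)[OF plane_posetD(3)[OF assms(1)]]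
        partial_order_onD(1)[OF plane_posetD(3)[OF assms(2)]] by (simp add: refl_on_def)
  next
    case False
    then have "f x \<noteq> f y" using bij x y by (auto simp: bij_betw_def inj_on_def)
    moreover have "(x, y) \<in> ptot P \<longleftrightarrow> (f x, f y) \<in> ptot Q"
      using mono_bij_betwD(2)[OF assms(3) x y]
        mono_bij_betw_reflects[OF linear_order_on_ptot[OF assms(1)]
          linear_order_onD(4)[OF linear_order_on_ptot[OF assms(2)]] assms(3) x y] by blast
    ultimately show ?thesis
      using pr_iff_ptot_not_ph[OF assms(1) x y False] assms(4)[OF x y] assms(4)[OF y x]
        pr_iff_ptot_not_ph[OF assms(2) bij_betw_apply[OF bij x] bij_betw_apply[OF bij y]] by blast
  qed
  with bij assms(4) show ?thesis unfolding pp_iso_map_def by blast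
qed


lemma theta_pp_iso_map:
  assumes "plane_poset P" "plane_poset P'" "plane_poset Q" "plane_poset Q'"
    "card (pcar P) = card (pcar Q)" "pp_iso_map f P P'" "pp_iso_map g Q Q'" "x \<in> pcar P"
  shows "theta P' Q' (f x) = g (theta P Q x)"
proof -
  have "card (pcar P') = card (pcar Q')"
    using assms(5-7) unfolding pp_iso_map_def by (metis bij_betw_same_card)
  then have "mono_bij_betw (theta P' Q' \<circ> f) (pcar P) (ptot P) (pcar Q') (ptot Q')"
    using mono_bij_betw_comp[OF pp_iso_map_mono_bij_betw[OF assms(6)] theta_mono_bij_betw[OF assms(2,4)]]
    by blast
  moreover have "mono_bij_betw (g \<circ> theta P Q) (pcar P) (ptot P) (pcar Q') (ptot Q')"
    by (rule mono_bij_betw_comp[OF theta_mono_bij_betw[OF assms(1,3,5)] pp_iso_map_mono_bij_betw[OF assms(7)]])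
  ultimately have "(theta P' Q' \<circ> f) x = (g \<circ> theta P Q) x"
    by (rule mono_bij_betw_unique[OF plane_posetD(1)[OF assms(4)] linear_order_on_ptot[OF assms(1)]
        linear_order_on_ptot[OF assms(4)] _ _ assms(8)])
  then show ?thesis by simp
qed

lemma pp_le_pp_iso:
  assumes "plane_poset P" "plane_poset P'" "plane_poset Q" "plane_poset Q'"
    "card (pcar P) = card (pcar Q)" "pp_iso P P'" "pp_iso Q Q'" "pp_le P Q"
  shows "pp_le P' Q'"
  unfolding pp_le_def
proof (intro ballI impI)
  obtain f g where f: "pp_iso_map f P P'" and g: "pp_iso_map g Q Q'"
    using assms(6,7) pp_iso_iff_pp_iso_map by blast
  have onto: "f ` pcar P = pcar P'" using f unfolding pp_iso_map_def bij_betw_def by blast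
  fix x' y' assume "x' \<in> pcar P'" "y' \<in> pcar P'" and h: "(theta P' Q' x', theta P' Q' y') \<in> ph Q'"
  then obtain x y where x: "x \<in> pcar P" "x' = f x" and y: "y \<in> pcar P" "y' = f y"
    using onto by blast
  have "(g (theta P Q x), g (theta P Q y)) \<in> ph Q'"
    using h x y theta_pp_iso_map[OF assms(1-5) f g] by simp
  moreover have "theta P Q x \<in> pcar Q" "theta P Q y \<in> pcar Q"
    using x(1) y(1) bij_betw_apply[OF mono_bij_betwD(1)[OF theta_mono_bij_betw[OF assms(1,3,5)]]] by auto
  ultimately have "(theta P Q x, theta P Q y) \<in> ph Q" using g unfolding pp_iso_map_def by blast
  then have "(x, y) \<in> ph P" using assms(8) x(1) y(1) unfolding pp_le_def by blast
  then show "(x', y') \<in> ph P'" using f x y unfolding pp_iso_map_def by blast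
qed

lemma pp_le_refl: "plane_poset P \<Longrightarrow> pp_le P P"
  unfolding pp_le_def by (simp add: theta_self)

lemma pp_le_trans:
  assumes "plane_poset P" "plane_poset Q" "plane_poset R"
    "card (pcar P) = card (pcar Q)" "card (pcar Q) = card (pcar R)" "pp_le P Q" "pp_le Q R"
  shows "pp_le P R"
  unfolding pp_le_def
proof (intro ballI impI)
  fix x y assume x: "x \<in> pcar P" and y: "y \<in> pcar P" and h: "(theta P R x, theta P R y) \<in> ph R"
  have "theta P Q x \<in> pcar Q" "theta P Q y \<in> pcar Q"
    using x y bij_betw_apply[OF mono_bij_betwD(1)[OF theta_mono_bij_betw[OF assms(1,2,4)]]] by auto
  moreover have "(theta Q R (theta P Q x), theta Q R (theta P Q y)) \<in> ph R"
    using h theta_comp[OF assms(1-5)] x y by simp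
  ultimately have "(theta P Q x, theta P Q y) \<in> ph Q" using assms(7) unfolding pp_le_def by blast
  then show "(x, y) \<in> ph P" using assms(6) x y unfolding pp_le_def by blast
qed

lemma pp_iso_if_pp_le_pp_le:
  assumes "plane_poset P" "plane_poset Q" "card (pcar P) = card (pcar Q)" "pp_le P Q" "pp_le Q P"
  shows "pp_iso P Q"
proof -
  note theta_PQ = theta_mono_bij_betw[OF assms(1-3)]
  have theta_QP_inverse: "theta Q P (theta P Q x) = x" if "x \<in> pcar P" for x
    using theta_comp[OF assms(1,2,1,3) assms(3)[symmetric] that] theta_self[OF assms(1) that] by simp
  have "(x, y) \<in> ph P \<longleftrightarrow> (theta P Q x, theta P Q y) \<in> ph Q"
    if "x \<in> pcar P" "y \<in> pcar P" for x y
    using assms(4,5) that theta_QP_inverse bij_betw_apply[OF mono_bij_betwD(1)[OF theta_PQ]]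
    unfolding pp_le_def by metis
  then show ?thesis
    using pp_iso_mapI[OF assms(1,2) theta_PQ] pp_iso_iff_pp_iso_map by blast
qed

definition pp_class :: "pposet \<Rightarrow> pposet set" where
  "pp_class P = {Q. plane_poset Q \<and> pp_iso P Q}"

lemma pp_class_eq: "pp_iso P Q \<Longrightarrow> pp_class P = pp_class Q"
  unfolding pp_class_def pp_iso_iff_pp_iso_map using pp_iso_map_inv pp_iso_map_comp by blast

lemma PP_memD:
  assumes "C \<in> PP n" "P \<in> C"
  shows "plane_poset P" "card (pcar P) = n" "C = pp_class P"
proof -
  obtain P0 where P0: "plane_poset P0" "card (pcar P0) = n" "C = pp_class P0"
    using assms(1) unfolding PP_def pp_class_def by blast
  then have iso: "pp_iso P0 P" "plane_poset P" using assms(2) unfolding pp_class_def by auto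
  then show "plane_poset P" "C = pp_class P" using pp_class_eq P0(3) by auto
  show "card (pcar P) = n"
    using iso(1) P0(2) unfolding pp_iso_def by (metis bij_betw_same_card)
qed

lemma pp_iso_refl: "pp_iso P P"
  unfolding pp_iso_def by (intro exI[of _ id]) simp

lemma PP_nonempty: "C \<in> PP n \<Longrightarrow> \<exists>P. P \<in> C"
  unfolding PP_def using pp_iso_refl by blast

lemma pp_le_PP_invariant:
  assumes "C \<in> PP n" "D \<in> PP n" "P \<in> C" "P' \<in> C" "Q \<in> D" "Q' \<in> D" "pp_le P Q"
  shows "pp_le P' Q'"
proof (rule pp_le_pp_iso[OF _ _ _ _ _ _ _ assms(7)])
  show "pp_iso P P'" "pp_iso Q Q'"
    using PP_memD(3)[OF assms(1,3)] PP_memD(3)[OF assms(2,5)] assms(4,6)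
    unfolding pp_class_def by auto
  show "card (pcar P) = card (pcar Q)"
    using PP_memD(2)[OF assms(1,3)] PP_memD(2)[OF assms(2,5)] by simp
qed (use PP_memD(1) assms(1-6) in blast)+

lemma PP_le_iff:
  assumes "C \<in> PP n" "D \<in> PP n" "P \<in> C" "Q \<in> D"
  shows "(C, D) \<in> PP_le n \<longleftrightarrow> pp_le P Q"
  using assms pp_le_PP_invariant[OF assms(1,2) _ assms(3) _ assms(4)] unfolding PP_le_def by blast

lemma refl_on_PP_le: "refl_on (PP n) (PP_le n)"
proof (rule refl_onI)
  fix C assume C: "C \<in> PP n"
  then obtain P where P: "P \<in> C" using PP_nonempty by blast
  show "(C, C) \<in> PP_le n"
    using PP_le_iff[OF C C P P] pp_le_refl[OF PP_memD(1)[OF C P]] by blast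
qed

lemma trans_PP_le: "trans (PP_le n)"
proof (rule transI)
  fix C D E assume CD: "(C, D) \<in> PP_le n" and DE: "(D, E) \<in> PP_le n"
  then have C: "C \<in> PP n" and D: "D \<in> PP n" and E: "E \<in> PP n" unfolding PP_le_def by auto
  obtain P Q R where P: "P \<in> C" and Q: "Q \<in> D" and R: "R \<in> E"
    using PP_nonempty[OF C] PP_nonempty[OF D] PP_nonempty[OF E] by blast
  have "pp_le P R"
    using pp_le_trans[OF PP_memD(1)[OF C P] PP_memD(1)[OF D Q] PP_memD(1)[OF E R]]
      PP_memD(2)[OF C P] PP_memD(2)[OF D Q] PP_memD(2)[OF E R]
      PP_le_iff[OF C D P Q] PP_le_iff[OF D E Q R] CD DE by simp
  then show "(C, E) \<in> PP_le n" using PP_le_iff[OF C E P R] by blast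
qed

lemma antisym_PP_le: "antisym (PP_le n)"
proof (rule antisymI)
  fix C D assume CD: "(C, D) \<in> PP_le n" and DC: "(D, C) \<in> PP_le n"
  then have C: "C \<in> PP n" and D: "D \<in> PP n" unfolding PP_le_def by auto
  obtain P Q where P: "P \<in> C" and Q: "Q \<in> D"
    using PP_nonempty[OF C] PP_nonempty[OF D] by blast
  have "pp_iso P Q"
    using pp_iso_if_pp_le_pp_le[OF PP_memD(1)[OF C P] PP_memD(1)[OF D Q]]
      PP_memD(2)[OF C P] PP_memD(2)[OF D Q] PP_le_iff[OF C D P Q] PP_le_iff[OF D C Q P] CD DC
    by simp
  then show "C = D" using pp_class_eq PP_memD(3)[OF C P] PP_memD(3)[OF D Q] by simp
qed

theorem proposition10:
  fixes n :: nat
  assumes "n \<ge> 1"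
  shows "(\<forall>C\<in>PP n. \<forall>D\<in>PP n. \<forall>P\<in>C. \<forall>P'\<in>C. \<forall>Q\<in>D. \<forall>Q'\<in>D.
            pp_le P Q \<longleftrightarrow> pp_le P' Q')
         \<and> partial_order_on (PP n) (PP_le n)"
proof
  show "\<forall>C\<in>PP n. \<forall>D\<in>PP n. \<forall>P\<in>C. \<forall>P'\<in>C. \<forall>Q\<in>D. \<forall>Q'\<in>D. pp_le P Q \<longleftrightarrow> pp_le P' Q'"
    using pp_le_PP_invariant by blast
  have "PP_le n \<subseteq> PP n \<times> PP n" unfolding PP_le_def by auto
  then show "partial_order_on (PP n) (PP_le n)"
    unfolding partial_order_on_def preorder_on_def using refl_on_PP_le trans_PP_le antisym_PP_le by blast
qed

end
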